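(* Consider the following setting. $\mathcal{G}$ is a connected undirected graph with nodes $\{1,\dots,n\}$, edges $\{1,\dots,m\}$ and incidence matrix $B\in\mathbb{R}^{n\times m}$; $p\ge1$ and $E=\begin{bmatrix} I_{p}\\ \mathbf{0}_{(n-p)\times p}\end{bmatrix}$. Let $T_x\in\mathbb{R}^{n\times n}$, $T_\mu,T_\xi\in\mathbb{R}^{m\times m}$, $T_\theta,T_\phi\in\mathbb{R}^{p\times p}$ be diagonal with strictly positive diagonal entries, $d\in\mathbb{R}^n$ a constant vector, $h(x)=(h_1(x_1),\dots,h_n(x_n))^T$ with each $h_i:\mathbb{R}\to\mathbb{R}$ continuously differentiable and strictly increasing, and $\overline y\in\mathbb{R}^n$ with $\overline y_i\in\mathcal{R}(h_i)$ for all $i$. Let $f(\mu)=(f_1(\mu_1),\dots,f_m(\mu_m))^T$ and $g(\theta)=(g_1(\theta_1),\dots,g_p(\theta_p))^T$ with $f_k,g_i:\mathbb{R}\to\mathbb{R}$. Let $Q=\operatorname{diag}(q_1,\dots,q_p)$, $q_i>0$, $r\in\mathbb{R}^p$, and let $L^{com}\in\mathbb{R}^{p\times p}$ be the Laplacian matrix of a weighted directed graph on $\{1,\dots,p\}$ that is balanced and strongly connected. Define $\overline u=Q^{-1}(\kappa-r)$ with $\kappa=E^T\frac{\mathbb{1}_n\mathbb{1}_n^T}{\mathbb{1}_p^TQ^{-1}\mathbb{1}_p}(d+EQ^{-1}r)$, and assume that there exists $\omega\in\mathbb{R}^m$ with $[B^\dagger(E\overline u-d)+(I-B^\dagger B)\omega]_k\in\mathcal{R}(f_k)$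 for all $k$, and that $\overline u_i\in\mathcal{R}(g_i)$ for all $i\in\{1,\dots,p\}$. Consider the closed-loop system $$\begin{aligned} T_x\dot x&=-Bf(\mu)+Eg(\theta)-d,\\ T_\mu\dot\mu&=B^T(h(x)-\overline y)-(f(\mu)-\xi),\\ T_\xi\dot\xi&=f(\mu)-\xi,\\ T_\theta\dot\theta&=-E^T(h(x)-\overline y)-(g(\theta)-\phi),\\ T_\phi\dot\phi&=g(\theta)-\phi-QL^{com}(Q\phi+r), \end{aligned}$$ with state $(x,\mu,\xi,\theta,\phi)\in\mathbb{R}^n\times\mathbb{R}^m\times\mathbb{R}^m\times\mathbb{R}^p\times\mathbb{R}^p$. Then this system has an equilibrium $(\overline x,\overline\mu,\overline\xi,\overline\theta,\overline\phi)$, and every equilibrium satisfies $h(\overline x)=\overline y$ and $g(\overline\theta)=\overline u$.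
   Context: $\mathcal{R}(f)$ denotes the range of a function $f$; $B^\dagger$ is the Moore–Penrose pseudoinverse of $B$; $\mathbb{1}_k$ is the all-ones vector of length $k$. The incidence matrix $B$ is obtained by arbitrarily orienting each edge: $b_{ik}=+1$ if node $i$ is the positive end of edge $k$, $-1$ if the negative end, $0$ otherwise. A weighted directed graph is balanced if at every node the weighted in-degree equals the weighted out-degree; its Laplacian is $L^{com}=D-A$ with $A$ the weighted adjacency matrix and $D$ the diagonal matrix of weighted out-degrees. The vector $\overline u$ is the minimizer of $\frac12u^TQu+r^Tu$ subject to $\mathbf{0}=-B\lambda+Eu-d$. *)

theory Defs
  imports Complex_Main "Jordan_Normal_Form.Matrix"
begin

(* Undirected graph with nodes 0..<n and edges 0..<m; edge k joins fst (ends k)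
   (its positive end) and snd (ends k) (its negative end). *)
definition graph_adj :: "nat \<Rightarrow> (nat \<Rightarrow> nat \<times> nat) \<Rightarrow> nat \<Rightarrow> nat \<Rightarrow> bool" where
  "graph_adj m ends i j \<longleftrightarrow> (\<exists>k<m. ends k = (i, j) \<or> ends k = (j, i))"

definition wf_graph :: "nat \<Rightarrow> nat \<Rightarrow> (nat \<Rightarrow> nat \<times> nat) \<Rightarrow> bool" where
  "wf_graph n m ends \<longleftrightarrow> (\<forall>k<m. fst (ends k) < n \<and> snd (ends k) < n \<and> fst (ends k) \<noteq> snd (ends k))"

definition connected_graph :: "nat \<Rightarrow> nat \<Rightarrow> (nat \<Rightarrow> nat \<times> nat) \<Rightarrow> bool" where
  "connected_graph n m ends \<longleftrightarrow> wf_graph n m ends \<and>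
     (\<forall>i<n. \<forall>j<n. (graph_adj m ends)\<^sup>*\<^sup>* i j)"

definition incidence_mat :: "nat \<Rightarrow> nat \<Rightarrow> (nat \<Rightarrow> nat \<times> nat) \<Rightarrow> real mat" where
  "incidence_mat n m ends = mat n m (\<lambda>(i, k).
      if i = fst (ends k) then 1 else if i = snd (ends k) then -1 else 0)"

definition pinv_mat :: "real mat \<Rightarrow> real mat" where
  "pinv_mat A = (THE X. X \<in> carrier_mat (dim_col A) (dim_row A) \<and>
      A * X * A = A \<and> X * A * X = X \<and>
      transpose_mat (A * X) = A * X \<and> transpose_mat (X * A) = X * A)"

definition weighted_digraph :: "nat \<Rightarrow> (nat \<Rightarrow> nat \<Rightarrow> real) \<Rightarrow> bool" where
  "weighted_digraph p a \<longleftrightarrow> (\<forall>i<p. \<forall>j<p. a i j \<ge> 0)"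

definition balanced_digraph :: "nat \<Rightarrow> (nat \<Rightarrow> nat \<Rightarrow> real) \<Rightarrow> bool" where
  "balanced_digraph p a \<longleftrightarrow> (\<forall>i<p. (\<Sum>j<p. a j i) = (\<Sum>j<p. a i j))"

definition strongly_connected_digraph :: "nat \<Rightarrow> (nat \<Rightarrow> nat \<Rightarrow> real) \<Rightarrow> bool" where
  "strongly_connected_digraph p a \<longleftrightarrow>
     (\<forall>i<p. \<forall>j<p. (\<lambda>u v. u < p \<and> v < p \<and> a u v > 0)\<^sup>*\<^sup>* i j)"

definition laplacian_mat :: "nat \<Rightarrow> (nat \<Rightarrow> nat \<Rightarrow> real) \<Rightarrow> real mat" where
  "laplacian_mat p a = mat p p (\<lambda>(i, j). (if i = j then (\<Sum>k<p. a i k) else 0) - a i j)"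

definition pos_diag_mat :: "nat \<Rightarrow> real mat \<Rightarrow> bool" where
  "pos_diag_mat k T \<longleftrightarrow> T \<in> carrier_mat k k \<and> diagonal_mat T \<and> (\<forall>i<k. T $$ (i, i) > 0)"

definition C1_fun :: "(real \<Rightarrow> real) \<Rightarrow> bool" where
  "C1_fun h \<longleftrightarrow> (\<exists>h'. (\<forall>x. (h has_real_derivative h' x) (at x)) \<and> continuous_on UNIV h')"

definition Emat :: "nat \<Rightarrow> nat \<Rightarrow> real mat" where
  "Emat n p = append_rows (1\<^sub>m p) (0\<^sub>m (n - p) p)"

definition ones_vec :: "nat \<Rightarrow> real vec" where
  "ones_vec k = vec k (\<lambda>_. 1)"

definition app_vec :: "(nat \<Rightarrow> real \<Rightarrow> real) \<Rightarrow> real vec \<Rightarrow> real vec" where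
  "app_vec F x = vec (dim_vec x) (\<lambda>i. F i (x $ i))"

definition kappa_vec :: "nat \<Rightarrow> nat \<Rightarrow> real mat \<Rightarrow> real vec \<Rightarrow> real vec \<Rightarrow> real vec" where
  "kappa_vec n p Qinv r d =
     transpose_mat (Emat n p) *\<^sub>v
       (((1 / (ones_vec p \<bullet> (Qinv *\<^sub>v ones_vec p))) \<cdot>\<^sub>m mat n n (\<lambda>_. 1)) *\<^sub>v
          (d + Emat n p *\<^sub>v (Qinv *\<^sub>v r)))"

definition ubar_vec :: "nat \<Rightarrow> nat \<Rightarrow> (nat \<Rightarrow> real) \<Rightarrow> real vec \<Rightarrow> real vec \<Rightarrow> real vec" where
  "ubar_vec n p q r d =
     (let Qinv = mat_diag p (\<lambda>i. 1 / q i) in Qinv *\<^sub>v (kappa_vec n p Qinv r d - r))"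

(* Equilibrium: the zero velocity satisfies each implicit ODE T \<dot>z = F(z) *)
definition is_equilibrium ::
  "nat \<Rightarrow> nat \<Rightarrow> nat \<Rightarrow> real mat \<Rightarrow> real mat \<Rightarrow> real mat \<Rightarrow> real mat \<Rightarrow> real mat \<Rightarrow> real mat \<Rightarrow>
   real vec \<Rightarrow> (nat \<Rightarrow> real \<Rightarrow> real) \<Rightarrow> real vec \<Rightarrow> (nat \<Rightarrow> real \<Rightarrow> real) \<Rightarrow> (nat \<Rightarrow> real \<Rightarrow> real) \<Rightarrow>
   real mat \<Rightarrow> real vec \<Rightarrow> real mat \<Rightarrow>
   real vec \<Rightarrow> real vec \<Rightarrow> real vec \<Rightarrow> real vec \<Rightarrow> real vec \<Rightarrow> bool" where
  "is_equilibrium n m p B Tx Tmu Txi Ttheta Tphi d h ybar f g Q r Lcom x mu xi theta phi \<longleftrightarrow>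
     x \<in> carrier_vec n \<and> mu \<in> carrier_vec m \<and> xi \<in> carrier_vec m \<and>
     theta \<in> carrier_vec p \<and> phi \<in> carrier_vec p \<and>
     (let E = Emat n p in
       Tx *\<^sub>v 0\<^sub>v n = - (B *\<^sub>v app_vec f mu) + E *\<^sub>v app_vec g theta - d \<and>
       Tmu *\<^sub>v 0\<^sub>v m = transpose_mat B *\<^sub>v (app_vec h x - ybar) - (app_vec f mu - xi) \<and>
       Txi *\<^sub>v 0\<^sub>v m = app_vec f mu - xi \<and>
       Ttheta *\<^sub>v 0\<^sub>v p = - (transpose_mat E *\<^sub>v (app_vec h x - ybar)) - (app_vec g theta - phi) \<and>
       Tphi *\<^sub>v 0\<^sub>v p = app_vec g theta - phi - Q *\<^sub>v (Lcom *\<^sub>v (Q *\<^sub>v phi + r)))"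

end

theory Submission
  imports Defs "Jordan_Normal_Form.Determinant"
begin

text \<open>
  Existence: take the outputs at their references and the inputs at the optimum \<open>u\<close>, whose
  entries make \<open>Q u + r\<close> a constant vector, so that the Laplacian term vanishes.  The line flows
  must solve \<open>B f(\<mu>) = E u - d\<close>; since the columns of \<open>B\<close> sum to zero and \<open>\<Sum> u = \<Sum> d\<close>, this is
  possible, and the pseudoinverse solution \<open>B\<^sup>\<dagger>(E u - d) + (I - B\<^sup>\<dagger>B)\<omega>\<close> does it because
  \<open>B B\<^sup>\<dagger>\<close> is the projection onto the zero-sum vectors.

  Uniqueness of the outputs: at an equilibrium \<open>B\<^sup>T (h(x) - y) = 0\<close>, so on the connected graph the
  output error is a constant \<open>c\<close>.  The \<open>\<theta>\<close>- and \<open>\<phi>\<close>-equations give \<open>q\<^sub>i (L z)\<^sub>i = -c\<close> for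
  \<open>z = Q \<phi> + r\<close>; summing \<open>(L z)\<^sub>i = -c/q\<^sub>i\<close> against the left null vector \<open>\<one>\<close> of the balanced
  Laplacian gives \<open>c = 0\<close>.  Then \<open>L z = 0\<close>, so by strong connectivity \<open>z\<close> is constant, which
  determines \<open>g(\<theta>)\<close> up to the constant, and the power balance \<open>\<Sum> g(\<theta>) = \<Sum> d\<close> fixes it.
\<close>

lemma mult_mat_zero_vec [simp]: "A \<in> carrier_mat k l \<Longrightarrow> A *\<^sub>v 0\<^sub>v l = (0\<^sub>v k :: 'a :: semiring_0 vec)"
  by (intro eq_vecI) auto

lemma zero_mat_mult_vec [simp]: "v \<in> carrier_vec l \<Longrightarrow> 0\<^sub>m k l *\<^sub>v v = (0\<^sub>v k :: 'a :: semiring_0 vec)"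
  by (intro eq_vecI) auto

lemma mat_diag_mult_vec_index:
  assumes "v \<in> carrier_vec p" "i < p"
  shows "(mat_diag p f *\<^sub>v v) $ i = f i * (v $ i :: real)"
proof -
  have "(mat_diag p f *\<^sub>v v) $ i = (\<Sum>j<p. (if i = j then f j else 0) * v $ j)"
    using assms by (auto simp: mat_diag_def scalar_prod_def lessThan_atLeast0)
  also have "\<dots> = (\<Sum>j<p. if j = i then f i * v $ i else 0)" by (intro sum.cong) auto
  finally show ?thesis using assms by simp
qed

lemma app_vec_choice:
  assumes "\<forall>i<dim_vec v. v $ i \<in> range (F i)"
  shows "app_vec F (vec (dim_vec v) (\<lambda>i. SOME t. F i t = v $ i)) = v"
proof (rule eq_vecI)
  fix i assume "i < dim_vec v"
  then obtain t where "F i t = v $ i" using assms by (metis rangeE)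
  then have "F i (SOME t. F i t = v $ i) = v $ i" by (rule someI)
  then show "app_vec F (vec (dim_vec v) (\<lambda>i. SOME t. F i t = v $ i)) $ i = v $ i"
    using \<open>i < dim_vec v\<close> by (simp add: app_vec_def)
qed (simp add: app_vec_def)

lemma Emat_carrier: "p \<le> n \<Longrightarrow> Emat n p \<in> carrier_mat n p"
  unfolding Emat_def by (metis carrier_append_rows le_add_diff_inverse one_carrier_mat zero_carrier_mat)

lemma Emat_index: "p \<le> n \<Longrightarrow> i < n \<Longrightarrow> j < p \<Longrightarrow> Emat n p $$ (i, j) = (if i = j then 1 else 0)"
  unfolding Emat_def append_rows_def by (auto simp: index_mat_four_block)

lemma Emat_mult_vec_index:
  assumes "p \<le> n" "v \<in> carrier_vec p" "i < n"
  shows "(Emat n p *\<^sub>v v) $ i = (if i < p then v $ i else 0)"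
proof -
  have "(Emat n p *\<^sub>v v) $ i = (\<Sum>j<p. Emat n p $$ (i, j) * v $ j)"
    using assms Emat_carrier[OF assms(1)] by (auto simp: scalar_prod_def lessThan_atLeast0)
  also have "\<dots> = (\<Sum>j<p. if j = i then v $ i else 0)"
    using assms by (intro sum.cong) (auto simp: Emat_index)
  finally show ?thesis by simp
qed

lemma transpose_Emat_mult_vec_index:
  assumes "p \<le> n" "y \<in> carrier_vec n" "i < p"
  shows "(transpose_mat (Emat n p) *\<^sub>v y) $ i = y $ i"
proof -
  have "(transpose_mat (Emat n p) *\<^sub>v y) $ i = (\<Sum>j<n. Emat n p $$ (j, i) * y $ j)"
    using assms Emat_carrier[OF assms(1)] by (auto simp: scalar_prod_def lessThan_atLeast0)
  also have "\<dots> = (\<Sum>j<n. if j = i then y $ i else 0)"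
    using assms by (intro sum.cong) (auto simp: Emat_index)
  finally show ?thesis using assms by simp
qed

lemma sum_Emat_mult_vec:
  assumes "p \<le> n" "v \<in> carrier_vec p"
  shows "(\<Sum>i<n. (Emat n p *\<^sub>v v) $ i) = (\<Sum>i<p. v $ i)"
proof -
  have "(\<Sum>i<n. (Emat n p *\<^sub>v v) $ i) = (\<Sum>i\<in>{..<n} \<inter> {i. i < p}. v $ i)"
    using assms by (simp add: Emat_mult_vec_index sum.inter_restrict)
  also have "{..<n} \<inter> {i. i < p} = {..<p}" using assms(1) by auto
  finally show ?thesis .
qed

subsection \<open>Incidence matrix of a connected graph\<close>

lemma incidence_mat_carrier: "incidence_mat n m ends \<in> carrier_mat n m"
  unfolding incidence_mat_def by auto

lemma incidence_mat_col_sum: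
  assumes "wf_graph n m ends" "k < m"
  shows "(\<Sum>i<n. incidence_mat n m ends $$ (i, k) * y i) = y (fst (ends k)) - y (snd (ends k))"
proof -
  have "(\<Sum>i<n. incidence_mat n m ends $$ (i, k) * y i)
      = (\<Sum>i<n. (if i = fst (ends k) then y i else 0) + (if i = snd (ends k) then - y i else 0))"
    using assms unfolding wf_graph_def incidence_mat_def by (intro sum.cong) auto
  also have "\<dots> = y (fst (ends k)) - y (snd (ends k))"
    using assms unfolding wf_graph_def by (simp add: sum.distrib)
  finally show ?thesis .
qed

lemma transpose_incidence_mult_vec_index:
  assumes "wf_graph n m ends" "y \<in> carrier_vec n" "k < m"
  shows "(transpose_mat (incidence_mat n m ends) *\<^sub>v y) $ k = y $ fst (ends k) - y $ snd (ends k)"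
  using assms incidence_mat_carrier[of n m ends] incidence_mat_col_sum[OF assms(1,3), of "\<lambda>i. y $ i"]
  by (simp add: scalar_prod_def lessThan_atLeast0)

lemma ones_mat_mult_incidence:
  assumes "wf_graph n m ends"
  shows "mat n n (\<lambda>_. 1) * incidence_mat n m ends = 0\<^sub>m n m"
  using incidence_mat_carrier[of n m ends] incidence_mat_col_sum[OF assms, of _ "\<lambda>_. 1"]
  by (intro eq_matI) (auto simp: scalar_prod_def lessThan_atLeast0)

lemma sum_incidence_mult_vec:
  assumes wf: "wf_graph n m ends" and w: "w \<in> carrier_vec m"
  shows "(\<Sum>i<n. (incidence_mat n m ends *\<^sub>v w) $ i) = 0"
proof -
  let ?B = "incidence_mat n m ends"
  have B: "?B \<in> carrier_mat n m" by (rule incidence_mat_carrier)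
  have ones: "ones_vec n \<in> carrier_vec n" by (simp add: ones_vec_def)
  have "transpose_mat ?B *\<^sub>v ones_vec n = 0\<^sub>v m"
    using transpose_incidence_mult_vec_index[OF wf ones] wf B
    by (intro eq_vecI) (auto simp: ones_vec_def wf_graph_def)
  then have "0 = ones_vec n \<bullet> (?B *\<^sub>v w)"
    using transpose_vec_mult_scalar[OF B w ones] w by simp
  then show ?thesis using B by (simp add: scalar_prod_def ones_vec_def lessThan_atLeast0)
qed

lemma incidence_kernel_const:
  assumes conn: "connected_graph n m ends" and y: "y \<in> carrier_vec n"
    and ker: "transpose_mat (incidence_mat n m ends) *\<^sub>v y = 0\<^sub>v m"
    and "i < n" "j < n"
  shows "y $ i = y $ j"
proof -
  have wf: "wf_graph n m ends" using conn unfolding connected_graph_def by blast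
  have edge: "y $ u = y $ v" if adj: "graph_adj m ends u v" for u v
  proof -
    obtain k where k: "k < m" "ends k = (u, v) \<or> ends k = (v, u)"
      using adj unfolding graph_adj_def by blast
    then have "y $ fst (ends k) = y $ snd (ends k)"
      using ker transpose_incidence_mult_vec_index[OF wf y k(1)] by (metis index_zero_vec(1) eq_iff_diff_eq_0)
    then show ?thesis using k(2) by auto
  qed
  have "(graph_adj m ends)\<^sup>*\<^sup>* i j" using conn \<open>i < n\<close> \<open>j < n\<close> unfolding connected_graph_def by blast
  then show ?thesis by induction (simp_all add: edge)
qed

subsection \<open>Laplacian of a balanced, strongly connected digraph\<close>

lemma laplacian_mat_carrier: "laplacian_mat p a \<in> carrier_mat p p"
  unfolding laplacian_mat_def by auto

lemma laplacian_mult_vec_index: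
  assumes "v \<in> carrier_vec p" "i < p"
  shows "(laplacian_mat p a *\<^sub>v v) $ i = (\<Sum>j<p. a i j * (v $ i - v $ j))"
proof -
  have "(laplacian_mat p a *\<^sub>v v) $ i
      = (\<Sum>j<p. ((if i = j then (\<Sum>k<p. a i k) else 0) - a i j) * v $ j)"
    using assms by (auto simp: laplacian_mat_def scalar_prod_def lessThan_atLeast0)
  also have "\<dots> = (\<Sum>j<p. if i = j then (\<Sum>k<p. a i k) * v $ i else 0) - (\<Sum>j<p. a i j * v $ j)"
    unfolding sum_subtractf[symmetric] by (intro sum.cong) (auto simp: left_diff_distrib)
  also have "\<dots> = (\<Sum>j<p. a i j * (v $ i - v $ j))"
    using assms by (simp add: sum_subtractf right_diff_distrib sum_distrib_right)
  finally show ?thesis .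
qed

lemma laplacian_mult_const: "laplacian_mat p a *\<^sub>v vec p (\<lambda>_. c) = 0\<^sub>v p"
proof (rule eq_vecI)
  fix i assume "i < dim_vec (0\<^sub>v p :: real vec)"
  then show "(laplacian_mat p a *\<^sub>v vec p (\<lambda>_. c)) $ i = 0\<^sub>v p $ i"
    by (subst laplacian_mult_vec_index) auto
qed (simp add: laplacian_mat_carrier[THEN carrier_matD(1)])

lemma sum_laplacian_mult_vec:
  assumes "balanced_digraph p a" "v \<in> carrier_vec p"
  shows "(\<Sum>i<p. (laplacian_mat p a *\<^sub>v v) $ i) = 0"
proof -
  have "(\<Sum>i<p. (laplacian_mat p a *\<^sub>v v) $ i)
      = (\<Sum>i<p. \<Sum>j<p. a i j * v $ i) - (\<Sum>i<p. \<Sum>j<p. a i j * v $ j)"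
    using assms by (simp add: laplacian_mult_vec_index right_diff_distrib sum_subtractf)
  also have "(\<Sum>i<p. \<Sum>j<p. a i j * v $ j) = (\<Sum>j<p. (\<Sum>i<p. a i j) * v $ j)"
    by (subst sum.swap) (simp add: sum_distrib_right)
  also have "\<dots> = (\<Sum>j<p. (\<Sum>i<p. a j i) * v $ j)"
    using assms(1) unfolding balanced_digraph_def by (intro sum.cong) auto
  finally show ?thesis by (simp add: sum_distrib_right)
qed

text \<open>Maximum principle: at a maximal entry of \<open>v\<close> every summand of \<open>(L v)\<^sub>i\<close> is nonnegative,
  so \<open>L v = 0\<close> propagates the maximum along every edge of the digraph.\<close>

lemma laplacian_kernel_const:
  assumes w: "weighted_digraph p a" and sc: "strongly_connected_digraph p a"
    and v: "v \<in> carrier_vec p" and ker: "\<forall>i<p. (laplacian_mat p a *\<^sub>v v) $ i = 0"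
    and "i < p" "j < p"
  shows "v $ i = v $ j"
proof -
  define M where "M = Max ((\<lambda>k. v $ k) ` {..<p})"
  have le_M: "v $ k \<le> M" if "k < p" for k using that unfolding M_def by (intro Max_ge) auto
  obtain i0 where i0: "i0 < p" "v $ i0 = M"
    using Max_in[of "(\<lambda>k. v $ k) ` {..<p}"] \<open>i < p\<close> unfolding M_def by fastforce
  have step_M: "v $ u' = M" if "u < p" "u' < p" "a u u' > 0" "v $ u = M" for u u'
  proof -
    have "\<forall>j\<in>{..<p}. 0 \<le> a u j * (v $ u - v $ j)"
      using w le_M that unfolding weighted_digraph_def by auto
    moreover have "(\<Sum>j<p. a u j * (v $ u - v $ j)) = 0"
      using ker laplacian_mult_vec_index[OF v that(1)] that by auto
    ultimately have "a u u' * (v $ u - v $ u') = 0"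
      using sum_nonneg_eq_0_iff[of "{..<p}" "\<lambda>j. a u j * (v $ u - v $ j)"] that(2) by simp
    then show ?thesis using that by auto
  qed
  have all_M: "v $ k = M" if "k < p" for k
  proof -
    have "(\<lambda>u v. u < p \<and> v < p \<and> a u v > 0)\<^sup>*\<^sup>* i0 k"
      using sc i0 that unfolding strongly_connected_digraph_def by blast
    then show ?thesis
    proof induction
      case base
      then show ?case using i0 by simp
    next
      case (step u u')
      then show ?case using step_M[of u u'] by blast
    qed
  qed
  show ?thesis using all_M \<open>i < p\<close> \<open>j < p\<close> by simp
qed

lemma laplacian_weighted_const_zero:
  assumes "balanced_digraph p a" "z \<in> carrier_vec p" "0 < p" "\<forall>i<p. q i > (0::real)"
    and const: "\<forall>i<p. q i * (laplacian_mat p a *\<^sub>v z) $ i = c"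
  shows "c = 0"
proof -
  have "0 = (\<Sum>i<p. (laplacian_mat p a *\<^sub>v z) $ i)"
    using sum_laplacian_mult_vec[OF assms(1,2)] by simp
  also have "\<dots> = (\<Sum>i<p. c / q i)"
    using const assms(4) by (intro sum.cong) (auto simp: field_simps)
  also have "\<dots> = c * (\<Sum>i<p. 1 / q i)" by (simp add: sum_distrib_left)
  finally show "c = 0"
    using assms(3,4) sum_pos[of "{..<p}" "\<lambda>i. 1 / q i"] by (auto simp: lessThan_empty_iff)
qed

subsection \<open>The pseudoinverse of the incidence matrix\<close>

lemma penrose_range_projection_unique:
  fixes A X Y :: "real mat"
  assumes A: "A \<in> carrier_mat n m" and X: "X \<in> carrier_mat m n" and Y: "Y \<in> carrier_mat m n"
    and X1: "A * X * A = A" and X3: "transpose_mat (A * X) = A * X"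
    and Y1: "A * Y * A = A" and Y3: "transpose_mat (A * Y) = A * Y"
  shows "A * X = A * Y"
proof -
  have "transpose_mat A = transpose_mat ((A * Y) * A)" using Y1 by simp
  also have "\<dots> = transpose_mat A * (A * Y)"
    using Y3 by (subst transpose_mult) (use A Y in auto)
  finally have AT: "transpose_mat A = transpose_mat A * (A * Y)" .
  have "A * X = transpose_mat X * transpose_mat A"
    using X3 by (metis A X transpose_mult)
  also have "\<dots> = (transpose_mat X * transpose_mat A) * (A * Y)"
    by (subst AT) (rule assoc_mult_mat[symmetric]; use A X Y in auto)
  also have "transpose_mat X * transpose_mat A = A * X"
    using X3 by (metis A X transpose_mult)
  also have "A * X * (A * Y) = (A * X * A) * Y"
    by (rule assoc_mult_mat[symmetric]) (use A X Y in auto)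
  finally show ?thesis using X1 by simp
qed

lemma penrose_domain_projection_unique:
  fixes A X Y :: "real mat"
  assumes A: "A \<in> carrier_mat n m" and X: "X \<in> carrier_mat m n" and Y: "Y \<in> carrier_mat m n"
    and X1: "A * X * A = A" and X4: "transpose_mat (X * A) = X * A"
    and Y1: "A * Y * A = A" and Y4: "transpose_mat (Y * A) = Y * A"
  shows "X * A = Y * A"
proof -
  have "transpose_mat A = transpose_mat (A * (Y * A))" using Y1 A Y by simp
  also have "\<dots> = (Y * A) * transpose_mat A"
    using Y4 by (subst transpose_mult) (use A Y in auto)
  finally have AT: "transpose_mat A = (Y * A) * transpose_mat A" .
  have "X * A = transpose_mat A * transpose_mat X"
    using X4 by (metis A X transpose_mult)
  also have "\<dots> = (Y * A) * (transpose_mat A * transpose_mat X)"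
    by (subst AT) (rule assoc_mult_mat; use A X Y in auto)
  also have "transpose_mat A * transpose_mat X = X * A"
    using X4 by (metis A X transpose_mult)
  also have "Y * A * (X * A) = Y * (A * X * A)"
    using assoc_mult_mat[OF Y A, of "X * A" m] assoc_mult_mat[OF A X A] A X by simp
  finally show ?thesis using X1 by simp
qed

lemma pinv_unique:
  fixes A X Y :: "real mat"
  assumes A: "A \<in> carrier_mat n m" and X: "X \<in> carrier_mat m n" and Y: "Y \<in> carrier_mat m n"
    and X1: "A * X * A = A" and X2: "X * A * X = X" and X3: "transpose_mat (A * X) = A * X"
    and X4: "transpose_mat (X * A) = X * A"
    and Y1: "A * Y * A = A" and Y2: "Y * A * Y = Y" and Y3: "transpose_mat (A * Y) = A * Y"
    and Y4: "transpose_mat (Y * A) = Y * A"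
  shows "X = Y"
proof -
  have "X = X * (A * X)" using X2 by (simp add: assoc_mult_mat[OF X A X])
  also have "\<dots> = (X * A) * Y"
    using penrose_range_projection_unique[OF A X Y X1 X3 Y1 Y3] by (simp add: assoc_mult_mat[OF X A Y])
  also have "\<dots> = Y"
    using penrose_domain_projection_unique[OF A X Y X1 X4 Y1 Y4] Y2 by simp
  finally show ?thesis .
qed

lemma pinv_mat_eqI:
  fixes A X :: "real mat"
  assumes "A \<in> carrier_mat n m" "X \<in> carrier_mat m n"
    and "A * X * A = A" "X * A * X = X" "transpose_mat (A * X) = A * X" "transpose_mat (X * A) = X * A"
  shows "pinv_mat A = X"
  unfolding pinv_mat_def
proof (rule the_equality)
  fix Y assume "Y \<in> carrier_mat (dim_col A) (dim_row A) \<and> A * Y * A = A \<and> Y * A * Y = Y \<and>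
      transpose_mat (A * Y) = A * Y \<and> transpose_mat (Y * A) = Y * A"
  then show "Y = X" using pinv_unique[OF assms(1,2) _ assms(3-6)] assms(1) by auto
qed (use assms in auto)

lemma inverse_symmetric_mat:
  fixes K Ki :: "real mat"
  assumes K: "K \<in> carrier_mat n n" and Ki: "Ki \<in> carrier_mat n n" and K_sym: "transpose_mat K = K"
    and inv: "Ki * K = 1\<^sub>m n" "K * Ki = 1\<^sub>m n"
  shows "transpose_mat Ki = Ki"
proof -
  have "transpose_mat Ki * K = transpose_mat (K * Ki)"
    using K_sym by (subst transpose_mult[of _ n n _ n]) (use K Ki in auto)
  then have left_inv: "transpose_mat Ki * K = 1\<^sub>m n" using inv by simp
  have "transpose_mat Ki = transpose_mat Ki * (K * Ki)" using Ki inv by simp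
  also have "\<dots> = (transpose_mat Ki * K) * Ki"
    by (rule assoc_mult_mat[symmetric]) (use K Ki in auto)
  finally show ?thesis using left_inv Ki by simp
qed

lemma transpose_mult_symmetric_zero:
  fixes A J :: "real mat"
  assumes A: "A \<in> carrier_mat n m" and J: "J \<in> carrier_mat n n"
    and J_sym: "transpose_mat J = J" and JA: "J * A = 0\<^sub>m n m"
  shows "transpose_mat A * J = 0\<^sub>m m n"
proof -
  have "transpose_mat A * J = transpose_mat (J * A)"
    using J_sym by (subst transpose_mult[of _ n n _ m]) (use A J in auto)
  then show ?thesis using JA by simp
qed

lemma regularised_gram_absorbs:
  fixes A J :: "real mat"
  assumes A: "A \<in> carrier_mat n m" and J: "J \<in> carrier_mat n n"
    and J_sym: "transpose_mat J = J" and J_idem: "J * J = J" and JA: "J * A = 0\<^sub>m n m"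
  shows "J * (A * transpose_mat A + J) = J" and "(A * transpose_mat A + J) * J = J"
proof -
  have ATJ: "transpose_mat A * J = 0\<^sub>m m n"
    using transpose_mult_symmetric_zero[OF A J J_sym JA] .
  have "J * (A * transpose_mat A + J) = J * (A * transpose_mat A) + J * J"
    by (rule mult_add_distrib_mat) (use A J in auto)
  also have "J * (A * transpose_mat A) = (J * A) * transpose_mat A"
    by (rule assoc_mult_mat[symmetric]) (use A J in auto)
  finally show "J * (A * transpose_mat A + J) = J" using A J J_idem JA by simp
  have "(A * transpose_mat A + J) * J = (A * transpose_mat A) * J + J * J"
    by (rule add_mult_distrib_mat) (use A J in auto)
  also have "(A * transpose_mat A) * J = A * (transpose_mat A * J)"
    by (rule assoc_mult_mat) (use A J in auto)
  finally show "(A * transpose_mat A + J) * J = J" using A J J_idem ATJ by simp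
qed

lemma regularised_gram_inverse:
  fixes A J Ki :: "real mat"
  assumes A: "A \<in> carrier_mat n m" and J: "J \<in> carrier_mat n n"
    and J_sym: "transpose_mat J = J" and J_idem: "J * J = J" and JA: "J * A = 0\<^sub>m n m"
    and Ki: "Ki \<in> carrier_mat n n"
    and inv: "Ki * (A * transpose_mat A + J) = 1\<^sub>m n" "(A * transpose_mat A + J) * Ki = 1\<^sub>m n"
  shows "J * Ki = J" and "Ki * J = J" and "transpose_mat Ki = Ki"
proof -
  define K where "K = A * transpose_mat A + J"
  have K: "K \<in> carrier_mat n n" unfolding K_def using A J by auto
  have JK: "J * K = J" and KJ: "K * J = J"
    unfolding K_def using regularised_gram_absorbs[OF A J J_sym J_idem JA] by simp_all
  have "J * Ki = (J * K) * Ki" using JK by simp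
  also have "\<dots> = J * (K * Ki)" by (rule assoc_mult_mat) (use J K Ki in auto)
  finally show "J * Ki = J" using inv(2) J unfolding K_def by simp
  have "Ki * J = Ki * (K * J)" using KJ by simp
  also have "\<dots> = (Ki * K) * J" by (rule assoc_mult_mat[symmetric]) (use J K Ki in auto)
  finally show "Ki * J = J" using inv(1) J unfolding K_def by simp
  have "transpose_mat K = K"
    unfolding K_def using A J J_sym by (subst transpose_add) (auto simp: transpose_mult[of _ n m _ n])
  then show "transpose_mat Ki = Ki"
    using inverse_symmetric_mat[OF K Ki] inv unfolding K_def by blast
qed

text \<open>In the application \<open>J\<close> is the orthogonal projection onto \<open>ker A\<^sup>T\<close>, which makes the
  regularised Gram matrix \<open>A A\<^sup>T + J\<close> invertible.\<close>

lemma pinv_mat_regularised_gram: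
  fixes A J Ki :: "real mat"
  assumes A: "A \<in> carrier_mat n m" and J: "J \<in> carrier_mat n n"
    and J_sym: "transpose_mat J = J" and J_idem: "J * J = J" and JA: "J * A = 0\<^sub>m n m"
    and Ki: "Ki \<in> carrier_mat n n"
    and inv: "Ki * (A * transpose_mat A + J) = 1\<^sub>m n" "(A * transpose_mat A + J) * Ki = 1\<^sub>m n"
  shows "pinv_mat A = transpose_mat A * Ki" and "A * pinv_mat A = 1\<^sub>m n - J"
    and "A * pinv_mat A * A = A"
proof -
  define X where "X = transpose_mat A * Ki"
  have X: "X \<in> carrier_mat m n" unfolding X_def using A Ki by auto
  note Ki_props = regularised_gram_inverse[OF A J J_sym J_idem JA Ki inv]
  have "(A * transpose_mat A + J) * Ki = (A * transpose_mat A) * Ki + J * Ki"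
    by (rule add_mult_distrib_mat) (use A J Ki in auto)
  also have "(A * transpose_mat A) * Ki = A * X"
    unfolding X_def by (rule assoc_mult_mat) (use A Ki in auto)
  finally have AX_J: "A * X + J = 1\<^sub>m n" using inv(2) Ki_props(1) by simp
  have AX: "A * X = 1\<^sub>m n - J"
  proof (rule eq_matI)
    fix i j assume "i < dim_row (1\<^sub>m n - J)" "j < dim_col (1\<^sub>m n - J)"
    moreover have "(A * X + J) $$ (i, j) = 1\<^sub>m n $$ (i, j)" using AX_J by simp
    ultimately show "(A * X) $$ (i, j) = (1\<^sub>m n - J) $$ (i, j)" using A X J by simp
  qed (use A X J in auto)
  have AXA: "A * X * A = A"
  proof -
    have "(1\<^sub>m n - J) * A = 1\<^sub>m n * A - J * A"
      by (rule minus_mult_distrib_mat) (use A J in auto)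
    then show "A * X * A = A"
      using AX JA A by (intro eq_matI) auto
  qed
  have "pinv_mat A = X"
  proof (rule pinv_mat_eqI[OF A X AXA])
    have "X * J = transpose_mat A * (Ki * J)"
      unfolding X_def by (rule assoc_mult_mat) (use A J Ki in auto)
    then have "X * J = 0\<^sub>m m n"
      using Ki_props(2) transpose_mult_symmetric_zero[OF A J J_sym JA] by simp
    have "X * A * X = X * (A * X)" by (rule assoc_mult_mat) (use A X in auto)
    also have "\<dots> = X * 1\<^sub>m n - X * J"
      unfolding AX by (rule mult_minus_distrib_mat) (use X J in auto)
    finally show "X * A * X = X"
      using \<open>X * J = 0\<^sub>m m n\<close> X by (intro eq_matI) auto
    show "transpose_mat (A * X) = A * X" using AX J_sym J by (simp add: transpose_minus[of "1\<^sub>m n" n n])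
    show "transpose_mat (X * A) = X * A"
      using Ki_props(3) A Ki unfolding X_def
      by (simp add: assoc_mult_mat transpose_mult[of _ m n _ m] transpose_mult[of _ n n _ m])
  qed
  then show "pinv_mat A = transpose_mat A * Ki" and "A * pinv_mat A = 1\<^sub>m n - J"
    and "A * pinv_mat A * A = A"
    using AX AXA unfolding X_def by simp_all
qed

lemma regularised_gram_invertible:
  fixes A J :: "real mat"
  assumes A: "A \<in> carrier_mat n m" and J: "J \<in> carrier_mat n n"
    and J_sym: "transpose_mat J = J" and J_idem: "J * J = J" and JA: "J * A = 0\<^sub>m n m"
    and ker: "\<And>v. v \<in> carrier_vec n \<Longrightarrow> transpose_mat A *\<^sub>v v = 0\<^sub>v m \<Longrightarrow> J *\<^sub>v v = v"
  shows "\<exists>Ki \<in> carrier_mat n n.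
           Ki * (A * transpose_mat A + J) = 1\<^sub>m n \<and> (A * transpose_mat A + J) * Ki = 1\<^sub>m n"
proof -
  define K where "K = A * transpose_mat A + J"
  have K: "K \<in> carrier_mat n n" unfolding K_def using A J by auto
  have "v = 0\<^sub>v n" if v: "v \<in> carrier_vec n" and Kv: "K *\<^sub>v v = 0\<^sub>v n" for v
  proof -
    define u where "u = transpose_mat A *\<^sub>v v"
    have u: "u \<in> carrier_vec m" unfolding u_def using A v by simp
    have "J *\<^sub>v v = (J * K) *\<^sub>v v"
      unfolding K_def using regularised_gram_absorbs(1)[OF A J J_sym J_idem JA] by simp
    also have "\<dots> = J *\<^sub>v (K *\<^sub>v v)" by (rule assoc_mult_mat_vec) (use J K v in auto)
    finally have Jv: "J *\<^sub>v v = 0\<^sub>v n" using Kv J by simp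
    have "K *\<^sub>v v = (A * transpose_mat A) *\<^sub>v v + J *\<^sub>v v"
      unfolding K_def by (rule add_mult_distrib_mat_vec) (use A J v in auto)
    also have "(A * transpose_mat A) *\<^sub>v v = A *\<^sub>v u"
      unfolding u_def by (rule assoc_mult_mat_vec) (use A v in auto)
    finally have Au: "A *\<^sub>v u = 0\<^sub>v n" using Kv Jv A u by simp
    have "u \<bullet> u = v \<bullet> (A *\<^sub>v u)"
      unfolding u_def by (rule transpose_vec_mult_scalar[OF A _ v]) (use u in \<open>simp add: u_def\<close>)
    then have "u \<bullet> u = 0" using Au v by simp
    then have "u = 0\<^sub>v m" using conjugate_square_eq_0_vec[OF u] by simp
    then show "v = 0\<^sub>v n" using ker[OF v] Jv unfolding u_def by simp
  qed
  then have "det K \<noteq> 0" using det_0_iff_vec_prod_zero[OF K] by blast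
  from det_non_zero_imp_unit[OF K this, of undefined]
  show ?thesis unfolding K_def Units_def ring_mat_def by auto
qed

definition averaging_mat :: "nat \<Rightarrow> real mat" where
  "averaging_mat n = (1 / real n) \<cdot>\<^sub>m mat n n (\<lambda>_. 1)"

lemma averaging_mat_carrier: "averaging_mat n \<in> carrier_mat n n"
  unfolding averaging_mat_def by simp

lemma transpose_averaging_mat: "transpose_mat (averaging_mat n) = averaging_mat n"
  unfolding averaging_mat_def by (intro eq_matI) auto

lemma averaging_mat_mult_vec_index:
  assumes "v \<in> carrier_vec n" "i < n"
  shows "(averaging_mat n *\<^sub>v v) $ i = (\<Sum>j<n. v $ j) / real n"
  using assms unfolding averaging_mat_def
  by (simp add: scalar_prod_def sum_divide_distrib lessThan_atLeast0)

lemma averaging_mat_idem: "0 < n \<Longrightarrow> averaging_mat n * averaging_mat n = averaging_mat n"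
  unfolding averaging_mat_def by (intro eq_matI) (simp_all add: scalar_prod_def)

lemma incidence_pinv:
  assumes conn: "connected_graph n m ends" and n: "0 < n"
  defines "B \<equiv> incidence_mat n m ends"
  shows "pinv_mat B \<in> carrier_mat m n" and "B * pinv_mat B = 1\<^sub>m n - averaging_mat n"
    and "B * pinv_mat B * B = B"
proof -
  have wf: "wf_graph n m ends" using conn unfolding connected_graph_def by blast
  have B: "B \<in> carrier_mat n m" unfolding B_def by (rule incidence_mat_carrier)
  have "averaging_mat n * B = (1 / real n) \<cdot>\<^sub>m (mat n n (\<lambda>_. 1) * B)"
    unfolding averaging_mat_def by (rule mult_smult_assoc_mat) (use B in auto)
  then have JB: "averaging_mat n * B = 0\<^sub>m n m"
    using ones_mat_mult_incidence[OF wf] unfolding B_def by simp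
  have ker: "averaging_mat n *\<^sub>v v = v"
    if v: "v \<in> carrier_vec n" and ker_B: "transpose_mat B *\<^sub>v v = 0\<^sub>v m" for v
  proof (rule eq_vecI)
    fix i assume i: "i < dim_vec v"
    have "v $ j = v $ i" if "j < n" for j
      using incidence_kernel_const[OF conn v ker_B[unfolded B_def] that] i v by simp
    then have "(\<Sum>j<n. v $ j) = real n * v $ i" by simp
    then show "(averaging_mat n *\<^sub>v v) $ i = v $ i"
      using i v n by (simp add: averaging_mat_mult_vec_index)
  qed (use v averaging_mat_carrier[of n] in simp)
  obtain Ki where "Ki \<in> carrier_mat n n" "Ki * (B * transpose_mat B + averaging_mat n) = 1\<^sub>m n"
    "(B * transpose_mat B + averaging_mat n) * Ki = 1\<^sub>m n"
    using regularised_gram_invertible[OF B averaging_mat_carrier transpose_averaging_mat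
        averaging_mat_idem[OF n] JB ker] by blast
  note pinv = pinv_mat_regularised_gram[OF B averaging_mat_carrier transpose_averaging_mat
      averaging_mat_idem[OF n] JB this]
  show "pinv_mat B \<in> carrier_mat m n" using pinv(1) B \<open>Ki \<in> carrier_mat n n\<close> by simp
  show "B * pinv_mat B = 1\<^sub>m n - averaging_mat n" by (rule pinv(2))
  show "B * pinv_mat B * B = B" by (rule pinv(3))
qed

lemma incidence_pinv_solution:
  assumes conn: "connected_graph n m ends" and n: "0 < n"
    and v: "v \<in> carrier_vec n" and sum_v: "(\<Sum>i<n. v $ i) = 0" and \<omega>: "\<omega> \<in> carrier_vec m"
  defines "B \<equiv> incidence_mat n m ends"
  shows "B *\<^sub>v (pinv_mat B *\<^sub>v v + (1\<^sub>m m - pinv_mat B * B) *\<^sub>v \<omega>) = v"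
proof -
  have B: "B \<in> carrier_mat n m" unfolding B_def by (rule incidence_mat_carrier)
  note pinv = incidence_pinv[OF conn n, folded B_def]
  have P: "1\<^sub>m m - pinv_mat B * B \<in> carrier_mat m m" using B pinv(1) by auto
  have "B * (1\<^sub>m m - pinv_mat B * B) = B * 1\<^sub>m m - B * (pinv_mat B * B)"
    by (rule mult_minus_distrib_mat) (use B pinv(1) in auto)
  also have "B * (pinv_mat B * B) = B"
    using pinv(3) assoc_mult_mat[OF B pinv(1) B] by simp
  finally have kernel_part: "B * (1\<^sub>m m - pinv_mat B * B) = 0\<^sub>m n m"
    using B by (intro eq_matI) auto
  have "averaging_mat n *\<^sub>v v = 0\<^sub>v n"
  proof (rule eq_vecI)
    fix i assume "i < dim_vec (0\<^sub>v n :: real vec)"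
    then show "(averaging_mat n *\<^sub>v v) $ i = 0\<^sub>v n $ i"
      by (subst averaging_mat_mult_vec_index[OF v]) (use sum_v in auto)
  qed (use averaging_mat_carrier[of n] in simp)
  then have "(1\<^sub>m n - averaging_mat n) *\<^sub>v v = v"
    using v minus_mult_distrib_mat_vec[OF one_carrier_mat averaging_mat_carrier v] by simp
  then have range_part: "B *\<^sub>v (pinv_mat B *\<^sub>v v) = v"
    using assoc_mult_mat_vec[OF B pinv(1) v] pinv(2) by simp
  have "B *\<^sub>v ((1\<^sub>m m - pinv_mat B * B) *\<^sub>v \<omega>) = 0\<^sub>v n"
    using assoc_mult_mat_vec[OF B P \<omega>] \<omega> kernel_part by simp
  then show ?thesis
    using mult_add_distrib_mat_vec[OF B, of "pinv_mat B *\<^sub>v v" "(1\<^sub>m m - pinv_mat B * B) *\<^sub>v \<omega>"]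
      range_part P pinv(1) v \<omega> by simp
qed

subsection \<open>The optimal input\<close>

text \<open>The common value of the entries of \<open>Q u + r\<close> at the optimum \<open>u\<close>: the marginal cost on which
  all agents agree.\<close>

definition consensus_level :: "nat \<Rightarrow> nat \<Rightarrow> (nat \<Rightarrow> real) \<Rightarrow> real vec \<Rightarrow> real vec \<Rightarrow> real" where
  "consensus_level n p q r d = ((\<Sum>j<n. d $ j) + (\<Sum>j<p. r $ j / q j)) / (\<Sum>j<p. 1 / q j)"

lemma ubar_vec_carrier: "ubar_vec n p q r d \<in> carrier_vec p"
  unfolding ubar_vec_def Let_def carrier_vec_def by (simp add: mat_diag_def)

lemma ubar_vec_index:
  assumes p: "p \<le> n" and d: "d \<in> carrier_vec n" and r: "r \<in> carrier_vec p" and i: "i < p"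
  shows "ubar_vec n p q r d $ i = (consensus_level n p q r d - r $ i) / q i"
proof -
  define Qinv where "Qinv = mat_diag p (\<lambda>i. 1 / q i)"
  define z where "z = d + Emat n p *\<^sub>v (Qinv *\<^sub>v r)"
  define s where "s = ones_vec p \<bullet> (Qinv *\<^sub>v ones_vec p)"
  have E: "Emat n p \<in> carrier_mat n p" by (rule Emat_carrier[OF p])
  have Qinv_r: "Qinv *\<^sub>v r \<in> carrier_vec p" unfolding Qinv_def by (rule mult_mat_vec_carrier[OF mat_diag_dim r])
  have z: "z \<in> carrier_vec n" unfolding z_def using d E Qinv_r by simp
  have "s = (\<Sum>j<p. ones_vec p $ j * (Qinv *\<^sub>v ones_vec p) $ j)"
    unfolding s_def Qinv_def by (simp add: scalar_prod_def lessThan_atLeast0 mat_diag_def)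
  also have "\<dots> = (\<Sum>j<p. 1 / q j)"
    unfolding Qinv_def
    by (intro sum.cong refl, subst mat_diag_mult_vec_index) (auto simp: ones_vec_def)
  finally have "s = (\<Sum>j<p. 1 / q j)" .
  moreover have "(\<Sum>j<n. z $ j) = (\<Sum>j<n. d $ j) + (\<Sum>j<p. r $ j / q j)"
    using d E Qinv_r sum_Emat_mult_vec[OF p Qinv_r]
    by (simp add: z_def sum.distrib Qinv_def mat_diag_mult_vec_index[OF r])
  ultimately have level: "(\<Sum>j<n. z $ j) / s = consensus_level n p q r d"
    unfolding consensus_level_def by simp
  define J where "J = (1 / s) \<cdot>\<^sub>m mat n n (\<lambda>_. 1)"
  have Jz: "J *\<^sub>v z \<in> carrier_vec n" unfolding J_def carrier_vec_def by simp
  have "kappa_vec n p Qinv r d $ i = (J *\<^sub>v z) $ i"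
    unfolding kappa_vec_def J_def[symmetric] s_def[symmetric] z_def[symmetric]
    using transpose_Emat_mult_vec_index[OF p Jz i] .
  also have "\<dots> = consensus_level n p q r d"
    using i p z level by (simp add: J_def scalar_prod_def sum_divide_distrib lessThan_atLeast0)
  finally have kappa: "kappa_vec n p Qinv r d $ i = consensus_level n p q r d" .
  have "kappa_vec n p Qinv r d \<in> carrier_vec p"
    using Emat_carrier[OF p] unfolding kappa_vec_def carrier_vec_def by simp
  then show ?thesis
    unfolding ubar_vec_def Let_def Qinv_def[symmetric] using r i kappa
    by (simp add: Qinv_def mat_diag_mult_vec_index)
qed

lemma sum_inputs_eq_demand_iff:
  assumes "0 < p" "\<forall>i<p. q i > 0"
  shows "(\<Sum>i<p. (\<alpha> - r $ i) / q i) = (\<Sum>j<n. d $ j) \<longleftrightarrow> \<alpha> = consensus_level n p q r d"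
proof -
  have s: "(\<Sum>j<p. 1 / q j) > 0"
    using assms sum_pos[of "{..<p}" "\<lambda>j. 1 / q j"] by (auto simp: lessThan_empty_iff)
  have "(\<Sum>i<p. (\<alpha> - r $ i) / q i) = \<alpha> * (\<Sum>j<p. 1 / q j) - (\<Sum>j<p. r $ j / q j)"
    by (simp add: sum_distrib_left sum_subtractf[symmetric] diff_divide_distrib)
  then show ?thesis
    using s unfolding consensus_level_def by (auto simp: field_simps)
qed

lemma sum_ubar_vec:
  assumes "p \<le> n" "0 < p" "d \<in> carrier_vec n" "r \<in> carrier_vec p" "\<forall>i<p. q i > 0"
  shows "(\<Sum>i<p. ubar_vec n p q r d $ i) = (\<Sum>j<n. d $ j)"
  using sum_inputs_eq_demand_iff[OF assms(2,5), where \<alpha> = "consensus_level n p q r d" and r = r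
      and n = n and d = d] assms
  by (simp add: ubar_vec_index)

subsection \<open>Equilibria of the closed loop\<close>

lemma is_equilibriumD:
  assumes eq: "is_equilibrium n m p B Tx Tmu Txi Ttheta Tphi d h ybar f g Q r Lcom x mu xi theta phi"
    and B: "B \<in> carrier_mat n m" and p: "p \<le> n"
    and T: "Tx \<in> carrier_mat n n" "Tmu \<in> carrier_mat m m" "Txi \<in> carrier_mat m m"
      "Ttheta \<in> carrier_mat p p" "Tphi \<in> carrier_mat p p"
    and Q: "Q \<in> carrier_mat p p"
    and d: "d \<in> carrier_vec n" and ybar: "ybar \<in> carrier_vec n"
  defines "F \<equiv> app_vec f mu" and "G \<equiv> app_vec g theta" and "y \<equiv> app_vec h x - ybar"
  shows "x \<in> carrier_vec n" and "mu \<in> carrier_vec m" and "theta \<in> carrier_vec p" and "phi \<in> carrier_vec p"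
    and "\<forall>i<n. (B *\<^sub>v F) $ i = (Emat n p *\<^sub>v G) $ i - d $ i"
    and "transpose_mat B *\<^sub>v y = 0\<^sub>v m"
    and "\<forall>i<p. G $ i - phi $ i = - y $ i"
    and "\<forall>i<p. G $ i - phi $ i = (Q *\<^sub>v (Lcom *\<^sub>v (Q *\<^sub>v phi + r))) $ i"
proof -
  have E: "Emat n p \<in> carrier_mat n p" by (rule Emat_carrier[OF p])
  have x: "x \<in> carrier_vec n" and mu: "mu \<in> carrier_vec m" and xi: "xi \<in> carrier_vec m"
    and theta: "theta \<in> carrier_vec p" and phi: "phi \<in> carrier_vec p"
    using eq unfolding is_equilibrium_def by auto
  have F: "F \<in> carrier_vec m" and G: "G \<in> carrier_vec p" and y: "y \<in> carrier_vec n"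
    unfolding F_def G_def y_def app_vec_def using mu theta x ybar by auto
  have e1: "0\<^sub>v n = - (B *\<^sub>v F) + Emat n p *\<^sub>v G - d"
    and e2: "0\<^sub>v m = transpose_mat B *\<^sub>v y - (F - xi)"
    and e3: "0\<^sub>v m = F - xi"
    and e4: "0\<^sub>v p = - (transpose_mat (Emat n p) *\<^sub>v y) - (G - phi)"
    and e5: "0\<^sub>v p = G - phi - Q *\<^sub>v (Lcom *\<^sub>v (Q *\<^sub>v phi + r))"
    using eq T unfolding is_equilibrium_def Let_def F_def G_def y_def by auto
  show "x \<in> carrier_vec n" "mu \<in> carrier_vec m" "theta \<in> carrier_vec p" "phi \<in> carrier_vec p"
    by (fact x mu theta phi)+
  show "\<forall>i<n. (B *\<^sub>v F) $ i = (Emat n p *\<^sub>v G) $ i - d $ i"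
  proof (intro allI impI)
    fix i assume "i < n"
    then have "0\<^sub>v n $ i = (- (B *\<^sub>v F) + Emat n p *\<^sub>v G - d) $ i" using e1 by simp
    then show "(B *\<^sub>v F) $ i = (Emat n p *\<^sub>v G) $ i - d $ i"
      using \<open>i < n\<close> B E F G d by simp
  qed
  have "F = xi"
  proof (rule eq_vecI)
    fix k assume "k < dim_vec xi"
    then have "0\<^sub>v m $ k = (F - xi) $ k" using e3 xi by simp
    then show "F $ k = xi $ k" using \<open>k < dim_vec xi\<close> F xi by simp
  qed (use F xi in simp)
  then show "transpose_mat B *\<^sub>v y = 0\<^sub>v m"
    using e2 B y xi by simp
  show "\<forall>i<p. G $ i - phi $ i = - y $ i"
  proof (intro allI impI)
    fix i assume "i < p"
    then have "0\<^sub>v p $ i = (- (transpose_mat (Emat n p) *\<^sub>v y) - (G - phi)) $ i" using e4 by simp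
    then show "G $ i - phi $ i = - y $ i"
      using \<open>i < p\<close> E y G phi transpose_Emat_mult_vec_index[OF p y \<open>i < p\<close>] by simp
  qed
  show "\<forall>i<p. G $ i - phi $ i = (Q *\<^sub>v (Lcom *\<^sub>v (Q *\<^sub>v phi + r))) $ i"
  proof (intro allI impI)
    fix i assume "i < p"
    then have "0\<^sub>v p $ i = (G - phi - Q *\<^sub>v (Lcom *\<^sub>v (Q *\<^sub>v phi + r))) $ i" using e5 by simp
    then show "G $ i - phi $ i = (Q *\<^sub>v (Lcom *\<^sub>v (Q *\<^sub>v phi + r))) $ i"
      using \<open>i < p\<close> Q G phi by simp
  qed
qed

lemma equilibrium_output_eq_ref:
  assumes eq: "is_equilibrium n m p (incidence_mat n m ends) Tx Tmu Txi Ttheta Tphi d h ybar f g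
      (mat_diag p q) r (laplacian_mat p a) x mu xi theta phi"
    and graph: "connected_graph n m ends" and p: "1 \<le> p" "p \<le> n"
    and T: "Tx \<in> carrier_mat n n" "Tmu \<in> carrier_mat m m" "Txi \<in> carrier_mat m m"
      "Ttheta \<in> carrier_mat p p" "Tphi \<in> carrier_mat p p"
    and d: "d \<in> carrier_vec n" and ybar: "ybar \<in> carrier_vec n"
    and q: "\<forall>i<p. q i > 0" and r: "r \<in> carrier_vec p"
    and balanced: "balanced_digraph p a"
  shows "app_vec h x = ybar"
proof -
  define y where "y = app_vec h x - ybar"
  define z where "z = mat_diag p q *\<^sub>v phi + r"
  note eqD = is_equilibriumD[OF eq incidence_mat_carrier p(2) T mat_diag_dim d ybar,
      folded y_def z_def]
  have y: "y \<in> carrier_vec n" unfolding y_def app_vec_def using eqD(1) ybar by auto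
  have z: "z \<in> carrier_vec p"
    unfolding z_def using mult_mat_vec_carrier[OF mat_diag_dim eqD(4)] r by simp
  have Lz: "laplacian_mat p a *\<^sub>v z \<in> carrier_vec p"
    by (rule mult_mat_vec_carrier[OF laplacian_mat_carrier z])
  have y_const: "y $ i = y $ 0" if "i < n" for i
    using incidence_kernel_const[OF graph y eqD(6) that] p by simp
  have "q i * (laplacian_mat p a *\<^sub>v z) $ i = - y $ 0" if "i < p" for i
    using eqD(7,8) y_const[of i] p that mat_diag_mult_vec_index[OF Lz that] by auto
  then have y0: "y $ 0 = 0"
    using laplacian_weighted_const_zero[OF balanced z _ q, of "- y $ 0"] p by simp
  have "y $ i = 0" if "i < n" for i using y_const[OF that] y0 by simp
  then show ?thesis
    using y ybar eqD(1) unfolding y_def by (intro eq_vecI) (auto simp: app_vec_def)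
qed

lemma equilibrium_input_eq_opt:
  assumes eq: "is_equilibrium n m p (incidence_mat n m ends) Tx Tmu Txi Ttheta Tphi d h ybar f g
      (mat_diag p q) r (laplacian_mat p a) x mu xi theta phi"
    and graph: "connected_graph n m ends" and p: "1 \<le> p" "p \<le> n"
    and T: "Tx \<in> carrier_mat n n" "Tmu \<in> carrier_mat m m" "Txi \<in> carrier_mat m m"
      "Ttheta \<in> carrier_mat p p" "Tphi \<in> carrier_mat p p"
    and d: "d \<in> carrier_vec n" and ybar: "ybar \<in> carrier_vec n"
    and q: "\<forall>i<p. q i > 0" and r: "r \<in> carrier_vec p"
    and dg: "weighted_digraph p a" "balanced_digraph p a" "strongly_connected_digraph p a"
  shows "app_vec g theta = ubar_vec n p q r d"
proof -
  define G where "G = app_vec g theta"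
  define z where "z = mat_diag p q *\<^sub>v phi + r"
  note eqD = is_equilibriumD[OF eq incidence_mat_carrier p(2) T mat_diag_dim d ybar,
      folded G_def z_def]
  have hx: "app_vec h x - ybar = 0\<^sub>v n"
    using equilibrium_output_eq_ref[OF eq graph p T d ybar q r dg(2)] ybar by simp
  have G: "G \<in> carrier_vec p" unfolding G_def app_vec_def using eqD(3) by auto
  have z: "z \<in> carrier_vec p"
    unfolding z_def using mult_mat_vec_carrier[OF mat_diag_dim eqD(4)] r by simp
  have Lz: "laplacian_mat p a *\<^sub>v z \<in> carrier_vec p"
    by (rule mult_mat_vec_carrier[OF laplacian_mat_carrier z])
  have G_phi: "G $ i = phi $ i" if "i < p" for i using eqD(7) hx that p by simp
  have "(laplacian_mat p a *\<^sub>v z) $ i = 0" if "i < p" for i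
    using eqD(8)[rule_format, OF that] G_phi[OF that] mat_diag_mult_vec_index[OF Lz that, of q]
      q[rule_format, OF that]
    by simp
  then have z_const: "z $ i = z $ 0" if "i < p" for i
    using laplacian_kernel_const[OF dg(1,3) z _ that, of 0] p by simp
  have G_i: "G $ i = (z $ 0 - r $ i) / q i" if "i < p" for i
  proof -
    have "z $ i = q i * phi $ i + r $ i"
      unfolding z_def using that eqD(4) r mat_diag_mult_vec_index[OF eqD(4) that] by simp
    then show ?thesis using G_phi[OF that] z_const[OF that] q that by (auto simp: field_simps)
  qed
  have wf: "wf_graph n m ends" using graph unfolding connected_graph_def by blast
  have F: "app_vec f mu \<in> carrier_vec m" using eqD(2) unfolding app_vec_def by simp
  have "0 = (\<Sum>i<n. (incidence_mat n m ends *\<^sub>v app_vec f mu) $ i)"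
    using sum_incidence_mult_vec[OF wf F] by simp
  also have "\<dots> = (\<Sum>i<n. (Emat n p *\<^sub>v G) $ i - d $ i)"
    using eqD(5) by (intro sum.cong) auto
  finally have "(\<Sum>i<p. G $ i) = (\<Sum>i<n. d $ i)"
    using sum_Emat_mult_vec[OF p(2) G] by (simp add: sum_subtractf)
  then have "z $ 0 = consensus_level n p q r d"
    using sum_inputs_eq_demand_iff[OF _ q] G_i p by simp
  then show ?thesis
    using G_i ubar_vec_index[OF p(2) d r] G ubar_vec_carrier[of n p q r d]
    unfolding G_def[symmetric] by (intro eq_vecI) (simp_all add: carrier_vecD)
qed

lemma power_balance_flow_exists:
  fixes n m p :: nat and ends :: "nat \<Rightarrow> nat \<times> nat" and q :: "nat \<Rightarrow> real" and r d :: "real vec"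
  defines "B \<equiv> incidence_mat n m ends" and "ubar \<equiv> ubar_vec n p q r d"
  assumes graph: "connected_graph n m ends" and p: "1 \<le> p" "p \<le> n"
    and d: "d \<in> carrier_vec n" and q: "\<forall>i<p. q i > 0" and r: "r \<in> carrier_vec p"
    and omega: "\<exists>\<omega> \<in> carrier_vec m. \<forall>k<m.
        (pinv_mat B *\<^sub>v (Emat n p *\<^sub>v ubar - d) + (1\<^sub>m m - pinv_mat B * B) *\<^sub>v \<omega>) $ k \<in> range (f k)"
  shows "\<exists>w \<in> carrier_vec m. B *\<^sub>v w = Emat n p *\<^sub>v ubar - d \<and> (\<forall>k<m. w $ k \<in> range (f k))"
proof -
  define v where "v = Emat n p *\<^sub>v ubar - d"
  have E: "Emat n p \<in> carrier_mat n p" by (rule Emat_carrier[OF p(2)])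
  have ubar: "ubar \<in> carrier_vec p" unfolding ubar_def by (rule ubar_vec_carrier)
  have v: "v \<in> carrier_vec n" unfolding v_def using E ubar d by simp
  have "(\<Sum>i<n. v $ i) = (\<Sum>i<n. (Emat n p *\<^sub>v ubar) $ i) - (\<Sum>i<n. d $ i)"
    unfolding v_def using E ubar d by (simp add: sum_subtractf)
  then have sum_v: "(\<Sum>i<n. v $ i) = 0"
    using sum_Emat_mult_vec[OF p(2) ubar] sum_ubar_vec[OF p(2) _ d r q] p unfolding ubar_def by simp
  obtain \<omega> where \<omega>: "\<omega> \<in> carrier_vec m"
    and f_rng: "\<forall>k<m. (pinv_mat B *\<^sub>v v + (1\<^sub>m m - pinv_mat B * B) *\<^sub>v \<omega>) $ k \<in> range (f k)"
    using omega unfolding v_def by blast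
  define w where "w = pinv_mat B *\<^sub>v v + (1\<^sub>m m - pinv_mat B * B) *\<^sub>v \<omega>"
  have B: "B \<in> carrier_mat n m" unfolding B_def by (rule incidence_mat_carrier)
  have pinv: "pinv_mat B \<in> carrier_mat m n"
    using incidence_pinv(1)[OF graph] p unfolding B_def by simp
  have "1\<^sub>m m - pinv_mat B * B \<in> carrier_mat m m" using B pinv by auto
  then have "w \<in> carrier_vec m" unfolding w_def using pinv \<omega> v by simp
  moreover have "B *\<^sub>v w = v"
    unfolding w_def B_def using incidence_pinv_solution[OF graph _ v sum_v \<omega>] p by simp
  moreover have "\<forall>k<m. w $ k \<in> range (f k)" using f_rng unfolding w_def .
  ultimately show ?thesis unfolding v_def by blast
qed

lemma equilibrium_exists:
  fixes n m p :: nat and ends :: "nat \<Rightarrow> nat \<times> nat" and q :: "nat \<Rightarrow> real" and r d :: "real vec"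
  defines "B \<equiv> incidence_mat n m ends" and "ubar \<equiv> ubar_vec n p q r d"
  assumes graph: "connected_graph n m ends" and p: "1 \<le> p" "p \<le> n"
    and T: "Tx \<in> carrier_mat n n" "Tmu \<in> carrier_mat m m" "Txi \<in> carrier_mat m m"
      "Ttheta \<in> carrier_mat p p" "Tphi \<in> carrier_mat p p"
    and d: "d \<in> carrier_vec n"
    and ybar: "ybar \<in> carrier_vec n" "\<forall>i<n. ybar $ i \<in> range (h i)"
    and q: "\<forall>i<p. q i > 0" and r: "r \<in> carrier_vec p"
    and omega: "\<exists>\<omega> \<in> carrier_vec m. \<forall>k<m.
        (pinv_mat B *\<^sub>v (Emat n p *\<^sub>v ubar - d) + (1\<^sub>m m - pinv_mat B * B) *\<^sub>v \<omega>) $ k \<in> range (f k)"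
    and ubar_rng: "\<forall>i<p. ubar $ i \<in> range (g i)"
  shows "\<exists>x mu xi theta phi. is_equilibrium n m p B Tx Tmu Txi Ttheta Tphi d h ybar f g
      (mat_diag p q) r (laplacian_mat p a) x mu xi theta phi"
proof -
  define E where "E = Emat n p"
  have B: "B \<in> carrier_mat n m" unfolding B_def by (rule incidence_mat_carrier)
  have E: "E \<in> carrier_mat n p" unfolding E_def by (rule Emat_carrier[OF p(2)])
  have ubar: "ubar \<in> carrier_vec p" unfolding ubar_def by (rule ubar_vec_carrier)
  obtain w where w: "w \<in> carrier_vec m" and Bw: "B *\<^sub>v w = E *\<^sub>v ubar - d"
    and f_rng: "\<forall>k<m. w $ k \<in> range (f k)"
    using power_balance_flow_exists[OF graph p d q r omega[unfolded B_def ubar_def]]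
    unfolding B_def E_def ubar_def by blast
  define x where "x = vec n (\<lambda>i. SOME t. h i t = ybar $ i)"
  define mu where "mu = vec m (\<lambda>k. SOME t. f k t = w $ k)"
  define theta where "theta = vec p (\<lambda>i. SOME t. g i t = ubar $ i)"
  have hx: "app_vec h x = ybar"
    unfolding x_def using app_vec_choice[of ybar h] ybar by simp
  have fmu: "app_vec f mu = w"
    unfolding mu_def using app_vec_choice[of w f] f_rng w by simp
  have gtheta: "app_vec g theta = ubar"
    unfolding theta_def using app_vec_choice[of ubar g] ubar_rng ubar by simp
  have consensus: "mat_diag p q *\<^sub>v ubar + r = vec p (\<lambda>_. consensus_level n p q r d)"
    using ubar r q ubar_vec_index[OF p(2) d r] mat_diag_mult_vec_index[OF ubar]
    unfolding ubar_def by (intro eq_vecI) auto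
  have "is_equilibrium n m p B Tx Tmu Txi Ttheta Tphi d h ybar f g
      (mat_diag p q) r (laplacian_mat p a) x mu w theta ubar"
    unfolding is_equilibrium_def Let_def E_def[symmetric] hx fmu gtheta consensus laplacian_mult_const
      mult_mat_zero_vec[OF mat_diag_dim]
    using T B E d w ubar ybar Bw mult_mat_vec_carrier[OF E ubar] mat_diag_dim[of p q]
    unfolding x_def mu_def theta_def by (auto intro!: eq_vecI)
  then show ?thesis by blast
qed

theorem lemma5:
  fixes n m p :: nat and ends :: "nat \<Rightarrow> nat \<times> nat"
    and Tx Tmu Txi Ttheta Tphi :: "real mat"
    and d ybar r :: "real vec" and q :: "nat \<Rightarrow> real"
    and h f g :: "nat \<Rightarrow> real \<Rightarrow> real" and a :: "nat \<Rightarrow> nat \<Rightarrow> real"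
  defines "B \<equiv> incidence_mat n m ends"
    and "E \<equiv> Emat n p"
    and "Q \<equiv> mat_diag p q"
    and "Lcom \<equiv> laplacian_mat p a"
    and "ubar \<equiv> ubar_vec n p q r d"
  assumes graph: "connected_graph n m ends"
    and p: "1 \<le> p" "p \<le> n"
    and Tx: "pos_diag_mat n Tx" and Tmu: "pos_diag_mat m Tmu" and Txi: "pos_diag_mat m Txi"
    and Ttheta: "pos_diag_mat p Ttheta" and Tphi: "pos_diag_mat p Tphi"
    and d: "d \<in> carrier_vec n"
    and h_C1: "\<forall>i<n. C1_fun (h i)" and h_mono: "\<forall>i<n. strict_mono (h i)"
    and ybar: "ybar \<in> carrier_vec n" "\<forall>i<n. ybar $ i \<in> range (h i)"
    and q: "\<forall>i<p. q i > 0" and r: "r \<in> carrier_vec p"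
    and dg: "weighted_digraph p a" "balanced_digraph p a" "strongly_connected_digraph p a"
    and omega: "\<exists>\<omega> \<in> carrier_vec m. \<forall>k<m.
        (pinv_mat B *\<^sub>v (E *\<^sub>v ubar - d) + (1\<^sub>m m - pinv_mat B * B) *\<^sub>v \<omega>) $ k \<in> range (f k)"
    and ubar_rng: "\<forall>i<p. ubar $ i \<in> range (g i)"
  shows "(\<exists>x mu xi theta phi.
            is_equilibrium n m p B Tx Tmu Txi Ttheta Tphi d h ybar f g Q r Lcom x mu xi theta phi)
       \<and> (\<forall>x mu xi theta phi.
            is_equilibrium n m p B Tx Tmu Txi Ttheta Tphi d h ybar f g Q r Lcom x mu xi theta phi
            \<longrightarrow> app_vec h x = ybar \<and> app_vec g theta = ubar)"
proof -
  have carriers: "Tx \<in> carrier_mat n n" "Tmu \<in> carrier_mat m m" "Txi \<in> carrier_mat m m"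
    "Ttheta \<in> carrier_mat p p" "Tphi \<in> carrier_mat p p"
    using Tx Tmu Txi Ttheta Tphi unfolding pos_diag_mat_def by blast+
  show ?thesis
    unfolding B_def E_def Q_def Lcom_def ubar_def
  proof (intro conjI allI impI)
    show "\<exists>x mu xi theta phi. is_equilibrium n m p (incidence_mat n m ends) Tx Tmu Txi Ttheta Tphi
        d h ybar f g (mat_diag p q) r (laplacian_mat p a) x mu xi theta phi"
      using equilibrium_exists[OF graph p carriers d ybar q r] omega ubar_rng
      unfolding B_def E_def ubar_def by blast
    fix x mu xi theta phi
    assume eq: "is_equilibrium n m p (incidence_mat n m ends) Tx Tmu Txi Ttheta Tphi
        d h ybar f g (mat_diag p q) r (laplacian_mat p a) x mu xi theta phi"
    show "app_vec h x = ybar"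
      by (rule equilibrium_output_eq_ref[OF eq graph p carriers d ybar(1) q r dg(2)])
    show "app_vec g theta = ubar_vec n p q r d"
      by (rule equilibrium_input_eq_opt[OF eq graph p carriers d ybar(1) q r dg])
  qed
qed

end
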